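(* Let $n\ge1$, $0\le c_0<c_1<\dots<c_n$, $v_0\ge v_1\ge\dots\ge v_n>0$. (1) Let $A=(a_{jk})_{j,k=0}^n$ with $a_{jk}=v_k-c_k$ if $j>k$, $a_{kk}=\frac{v_k}{2}-c_k$, $a_{jk}=-c_j$ if $j<k$. (2) Let $0\le\rho_k<\frac{v_k}{2}$ for $k=0,\dots,n$ and let $B=(b_{jk})_{j,k=0}^n$ with $b_{jk}=v_k-c_k$ if $j>k$, $b_{kk}=\frac{v_k}{2}-c_k-\rho_k$, $b_{jk}=-c_j$ if $j<k$. For each of these pay-off matrices there exists a unique ESS, and the pay-off matrix is conditionally negative definite.
   Context: Strategies are indexed $0,\dots,n$; the set of mixed strategies is $\overline\Delta=\{\mathbf{q}\in[0,1]^{n+1}:\sum_j q_j=1\}$. For a matrix $M$, $\mathbf{p}\in\overline\Delta$ is an ESS for $M$ if (i) $\mathbf{p}^TM\mathbf{p}\ge\mathbf{q}^TM\mathbf{p}$ for all $\mathbf{q}\in\overline\Delta$ and (ii) whenever $\mathbf{q}\ne\mathbf{p}$ and $\mathbf{p}^TM\mathbf{p}=\mathbf{q}^TM\mathbf{p}$, then $\mathbf{p}^TM\mathbf{q}>\mathbf{q}^TM\mathbf{q}$. $M\in\mathbb{R}^{(n+1)\times(n+1)}$ is conditionally negative definite if $\mathbf{y}^TM\mathbf{y}<0$ for all nonzero $\mathbf{y}\in\mathbb{R}^{n+1}$ with $\sum_j y_j=0$. *)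

theory Defs
  imports Main "HOL-Library.FuncSet" Complex_Main
begin

text \<open>Vectors in R^(n+1) are functions nat => real
  (only indices 0..n matter); matrices are functions nat => nat => real.
  Mixed strategies are taken to vanish outside 0..n so that uniqueness is meaningful.\<close>

definition qform :: "nat \<Rightarrow> (nat \<Rightarrow> real) \<Rightarrow> (nat \<Rightarrow> nat \<Rightarrow> real) \<Rightarrow> (nat \<Rightarrow> real) \<Rightarrow> real" where
  "qform n x M y = (\<Sum>j\<le>n. \<Sum>k\<le>n. x j * M j k * y k)"

definition mixed_strategies :: "nat \<Rightarrow> (nat \<Rightarrow> real) set" where
  "mixed_strategies n = {q. (\<forall>j\<le>n. 0 \<le> q j \<and> q j \<le> 1) \<and> (\<Sum>j\<le>n. q j) = 1 \<and> (\<forall>j>n. q j = 0)}"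

definition is_ESS :: "nat \<Rightarrow> (nat \<Rightarrow> nat \<Rightarrow> real) \<Rightarrow> (nat \<Rightarrow> real) \<Rightarrow> bool" where
  "is_ESS n M p \<longleftrightarrow> p \<in> mixed_strategies n \<and>
     (\<forall>q\<in>mixed_strategies n. qform n p M p \<ge> qform n q M p) \<and>
     (\<forall>q\<in>mixed_strategies n. q \<noteq> p \<and> qform n p M p = qform n q M p \<longrightarrow>
        qform n p M q > qform n q M q)"

definition cond_neg_def :: "nat \<Rightarrow> (nat \<Rightarrow> nat \<Rightarrow> real) \<Rightarrow> bool" where
  "cond_neg_def n M \<longleftrightarrow> (\<forall>y. (\<exists>j\<le>n. y j \<noteq> 0) \<and> (\<Sum>j\<le>n. y j) = 0 \<longrightarrow> qform n y M y < 0)"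

end

theory Submission
  imports Defs
begin

(* The symmetric part of the pay-off matrix is w(min j k) - rho_j [j = k] with
   w = v/2 - c strictly decreasing.  Summation by parts turns y^T M y, for y with
   sum 0, into sum_{i<n} (w_{i+1} - w_i) T_i^2 - sum_j rho_j y_j^2, where T_i is the
   tail sum of y beyond i; hence M is conditionally negative definite.  For such a
   matrix a symmetric Nash equilibrium p beats every other strategy q in the second
   ESS condition, so p is an ESS and the only one.  A Nash equilibrium exists because
   every column of M is constant below the diagonal and larger there than on it:
   starting from x_n = 1, choose x_{n-1}, ..., x_0 in turn so that strategy j is no
   better than n against x, and equally good if x_j > 0; choosing x_j leaves the
   comparisons for the strategies above j untouched. *)

lemma qform_self_eq_symmetric_part:
  "qform n y M y = (\<Sum>j\<le>n. \<Sum>k\<le>n. y j * y k * ((M j k + M k j) / 2))"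
proof -
  have "qform n y M y = (\<Sum>j\<le>n. \<Sum>k\<le>n. y k * M k j * y j)"
    unfolding qform_def by (rule sum.swap)
  then have "2 * qform n y M y = (\<Sum>j\<le>n. \<Sum>k\<le>n. y j * M j k * y k + y k * M k j * y j)"
    by (simp add: qform_def sum.distrib)
  then show ?thesis
    by (simp add: sum_divide_distrib[symmetric] field_simps)
qed

lemma sum_sum_min_eq_tail_sums:
  fixes w y :: "nat \<Rightarrow> real"
  shows "(\<Sum>j\<le>n. \<Sum>k\<le>n. y j * y k * w (min j k)) =
    w 0 * (\<Sum>j\<le>n. y j)\<^sup>2 + (\<Sum>i<n. (w (Suc i) - w i) * (\<Sum>j\<in>{i<..n}. y j)\<^sup>2)"
proof -
  define z where "z i j = (if i < j then y j else 0)" for i j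
  have tail: "(\<Sum>j\<le>n. z i j) = (\<Sum>j\<in>{i<..n}. y j)" for i
    unfolding z_def by (simp add: sum.If_cases) (intro sum.cong; auto)
  have min: "y j * y k * w (min j k) = y j * y k * w 0 + (\<Sum>i<n. (w (Suc i) - w i) * (z i j * z i k))"
    if "j \<le> n" "k \<le> n" for j k
  proof -
    have "(\<Sum>i<n. (w (Suc i) - w i) * (z i j * z i k)) =
        (\<Sum>i<n. if i < min j k then y j * y k * (w (Suc i) - w i) else 0)"
      unfolding z_def by (intro sum.cong) auto
    also have "\<dots> = (\<Sum>i\<in>{i \<in> {..<n}. i < min j k}. y j * y k * (w (Suc i) - w i))"
      by (rule sum.inter_filter[symmetric]) simp
    also have "{i \<in> {..<n}. i < min j k} = {..<min j k}" using that by auto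
    finally have "(\<Sum>i<n. (w (Suc i) - w i) * (z i j * z i k)) = y j * y k * (\<Sum>i<min j k. w (Suc i) - w i)"
      by (simp add: sum_distrib_left)
    then show ?thesis by (simp add: sum_lessThan_telescope algebra_simps)
  qed
  have "(\<Sum>j\<le>n. \<Sum>k\<le>n. y j * y k * w (min j k)) =
    (\<Sum>j\<le>n. \<Sum>k\<le>n. y j * y k * w 0 + (\<Sum>i<n. (w (Suc i) - w i) * (z i j * z i k)))"
    by (intro sum.cong refl) (simp add: min)
  also have "\<dots> = w 0 * (\<Sum>j\<le>n. \<Sum>k\<le>n. y j * y k) + (\<Sum>i<n. (w (Suc i) - w i) * (\<Sum>j\<le>n. \<Sum>k\<le>n. z i j * z i k))"
    by (simp add: sum.distrib sum_distrib_left sum.swap[where A = "{..<n}"] mult_ac)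
  also have "\<dots> = w 0 * (\<Sum>j\<le>n. y j)\<^sup>2 + (\<Sum>i<n. (w (Suc i) - w i) * (\<Sum>j\<in>{i<..n}. y j)\<^sup>2)"
    by (simp add: power2_eq_square sum_product flip: tail)
  finally show ?thesis .
qed

lemma zero_if_tail_sums_zero:
  fixes y :: "nat \<Rightarrow> real"
  assumes total: "(\<Sum>j\<le>n. y j) = 0" and tails: "\<And>i. i < n \<Longrightarrow> (\<Sum>j\<in>{i<..n}. y j) = 0"
    and "j \<le> n"
  shows "y j = 0"
proof (cases j)
  case 0
  have "{..n} = insert 0 {0<..n}" by auto
  then have "(\<Sum>j\<le>n. y j) = y 0 + (\<Sum>j\<in>{0<..n}. y j)" by simp
  with total tails[of 0] show ?thesis using 0 by (cases n) auto
next
  case (Suc i)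
  with \<open>j \<le> n\<close> have "{i<..n} = insert j {j<..n}" by auto
  then have "(\<Sum>j\<in>{i<..n}. y j) = y j + (\<Sum>j\<in>{j<..n}. y j)" by simp
  with tails[of i] tails[of j] show ?thesis using Suc \<open>j \<le> n\<close> by (cases "j = n") auto
qed

lemma cond_neg_def_if_symmetric_part_min:
  fixes w \<rho> :: "nat \<Rightarrow> real"
  assumes sym: "\<And>j k. (M j k + M k j) / 2 = w (min j k) - (if j = k then \<rho> j else 0)"
    and w_decreasing: "\<And>i. i < n \<Longrightarrow> w (Suc i) < w i"
    and \<rho>_nonneg: "\<And>j. j \<le> n \<Longrightarrow> 0 \<le> \<rho> j"
  shows "cond_neg_def n M"
  unfolding cond_neg_def_def
proof (intro allI impI, elim conjE exE)
  fix y :: "nat \<Rightarrow> real" and j0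
  assume "j0 \<le> n" "y j0 \<noteq> 0" and total: "(\<Sum>j\<le>n. y j) = 0"
  then obtain i0 where i0: "i0 < n" "(\<Sum>j\<in>{i0<..n}. y j) \<noteq> 0"
    using zero_if_tail_sums_zero[OF total, of j0] by blast
  have diag: "(\<Sum>j\<le>n. \<Sum>k\<le>n. y j * y k * (if j = k then \<rho> j else 0)) = (\<Sum>j\<le>n. \<rho> j * (y j)\<^sup>2)"
    by (simp add: if_distrib power2_eq_square mult_ac cong: if_cong)
  have "qform n y M y = (\<Sum>i<n. (w (Suc i) - w i) * (\<Sum>j\<in>{i<..n}. y j)\<^sup>2) - (\<Sum>j\<le>n. \<rho> j * (y j)\<^sup>2)"
    by (simp add: qform_self_eq_symmetric_part sym right_diff_distrib sum_subtractf diag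
        sum_sum_min_eq_tail_sums total)
  moreover have "0 < (\<Sum>i<n. (w i - w (Suc i)) * (\<Sum>j\<in>{i<..n}. y j)\<^sup>2)"
    using i0 w_decreasing by (intro sum_pos2[where i = i0]) (auto simp: less_imp_le)
  moreover have "0 \<le> (\<Sum>j\<le>n. \<rho> j * (y j)\<^sup>2)"
    using \<rho>_nonneg by (intro sum_nonneg) auto
  ultimately show "qform n y M y < 0"
    by (simp add: left_diff_distrib sum_subtractf)
qed

lemma qform_diff_left: "qform n (\<lambda>i. a i - b i) M y = qform n a M y - qform n b M y"
  unfolding qform_def by (simp add: algebra_simps sum_subtractf)

lemma qform_diff_right: "qform n x M (\<lambda>i. a i - b i) = qform n x M a - qform n x M b"
  unfolding qform_def by (simp add: algebra_simps sum_subtractf)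

definition nash_equilibrium :: "nat \<Rightarrow> (nat \<Rightarrow> nat \<Rightarrow> real) \<Rightarrow> (nat \<Rightarrow> real) \<Rightarrow> bool" where
  "nash_equilibrium n M p \<longleftrightarrow>
     p \<in> mixed_strategies n \<and> (\<forall>q\<in>mixed_strategies n. qform n q M p \<le> qform n p M p)"

lemma cond_neg_def_nash_equilibrium_stable:
  assumes cnd: "cond_neg_def n M" and p: "nash_equilibrium n M p"
    and q: "q \<in> mixed_strategies n" and "q \<noteq> p"
  shows "qform n q M q < qform n p M q"
proof -
  have p_mixed: "p \<in> mixed_strategies n" using p unfolding nash_equilibrium_def by blast
  define y where "y i = q i - p i" for i
  have "\<exists>j\<le>n. y j \<noteq> 0"
  proof (rule ccontr)
    assume "\<not> ?thesis"
    then have "q j = p j" for j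
      using p_mixed q unfolding y_def mixed_strategies_def by (cases "j \<le> n") auto
    with \<open>q \<noteq> p\<close> show False by auto
  qed
  moreover have "(\<Sum>j\<le>n. y j) = 0"
    using p_mixed q unfolding y_def mixed_strategies_def by (simp add: sum_subtractf)
  ultimately have "qform n y M y < 0" using cnd unfolding cond_neg_def_def by blast
  moreover have "qform n y M y = qform n q M q - qform n q M p - qform n p M q + qform n p M p"
    unfolding y_def qform_diff_left qform_diff_right by simp
  moreover have "qform n q M p \<le> qform n p M p" using p q unfolding nash_equilibrium_def by blast
  ultimately show ?thesis by linarith
qed

lemma ex1_ESS_if_cond_neg_def:
  assumes cnd: "cond_neg_def n M" and p: "nash_equilibrium n M p"
  shows "\<exists>!p. is_ESS n M p"
proof
  show "is_ESS n M p"
    using p cond_neg_def_nash_equilibrium_stable[OF cnd p]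
    unfolding is_ESS_def nash_equilibrium_def by auto
next
  fix p' assume "is_ESS n M p'"
  then have p': "nash_equilibrium n M p'"
    unfolding is_ESS_def nash_equilibrium_def by auto
  show "p' = p"
  proof (rule ccontr)
    assume "p' \<noteq> p"
    then have "qform n p' M p' < qform n p M p'"
      using cond_neg_def_nash_equilibrium_stable[OF cnd p] p' unfolding nash_equilibrium_def by blast
    with p' p show False unfolding nash_equilibrium_def by force
  qed
qed

definition pure_payoff :: "nat \<Rightarrow> (nat \<Rightarrow> nat \<Rightarrow> real) \<Rightarrow> (nat \<Rightarrow> real) \<Rightarrow> nat \<Rightarrow> real" where
  "pure_payoff n M x j = (\<Sum>k\<le>n. M j k * x k)"

lemma qform_eq_sum_pure_payoff: "qform n q M p = (\<Sum>j\<le>n. q j * pure_payoff n M p j)"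
  unfolding qform_def pure_payoff_def by (simp add: sum_distrib_left mult.assoc)

lemma nash_equilibrium_if_best_replies_on_support:
  assumes p: "p \<in> mixed_strategies n"
    and best: "\<And>j. j \<le> n \<Longrightarrow> pure_payoff n M p j \<le> u"
    and support: "\<And>j. j \<le> n \<Longrightarrow> 0 < p j \<Longrightarrow> pure_payoff n M p j = u"
  shows "nash_equilibrium n M p"
proof -
  have payoff_le: "qform n q M p \<le> u" if q: "q \<in> mixed_strategies n" for q
  proof -
    have "qform n q M p \<le> (\<Sum>j\<le>n. q j * u)"
      unfolding qform_eq_sum_pure_payoff
      using q best unfolding mixed_strategies_def by (intro sum_mono mult_left_mono) auto
    also have "\<dots> = u" using q unfolding mixed_strategies_def by (simp flip: sum_distrib_right)
    finally show ?thesis .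
  qed
  have "p j * pure_payoff n M p j = p j * u" if "j \<le> n" for j
    using support[OF that] p that unfolding mixed_strategies_def
    by (cases "p j = 0") (auto simp: less_le)
  then have "qform n p M p = (\<Sum>j\<le>n. p j * u)"
    unfolding qform_eq_sum_pure_payoff by (intro sum.cong) auto
  also have "\<dots> = u" using p unfolding mixed_strategies_def by (simp flip: sum_distrib_right)
  finally show ?thesis
    using p payoff_le unfolding nash_equilibrium_def by simp
qed

lemma pure_payoff_fun_upd:
  "j \<le> n \<Longrightarrow> pure_payoff n M (x(j := t)) i = pure_payoff n M x i + M i j * (t - x j)"
  unfolding pure_payoff_def by (simp add: sum.remove[of "{..n}" j] algebra_simps)

lemma best_replies_by_backward_induction:
  assumes columns: "\<And>j k. k < j \<Longrightarrow> j < n \<Longrightarrow> M j k = M n k"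
    and diagonal: "\<And>j. j < n \<Longrightarrow> M j j < M n j"
    and "j \<le> n"
  shows "\<exists>x. (\<forall>i. 0 \<le> x i) \<and> x n = 1 \<and> (\<forall>i. i < j \<or> n < i \<longrightarrow> x i = 0) \<and>
    (\<forall>i. j \<le> i \<and> i \<le> n \<longrightarrow> pure_payoff n M x i \<le> pure_payoff n M x n \<and>
       (0 < x i \<longrightarrow> pure_payoff n M x i = pure_payoff n M x n))"
  using \<open>j \<le> n\<close>
proof (induction j rule: inc_induct)
  case base
  show ?case by (rule exI[of _ "\<lambda>i. if i = n then 1 else 0"]) auto
next
  case (step j)
  then obtain x where nonneg: "\<forall>i. 0 \<le> x i" and last: "x n = 1"
    and support: "\<forall>i. i < Suc j \<or> n < i \<longrightarrow> x i = 0"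
    and best: "\<forall>i. Suc j \<le> i \<and> i \<le> n \<longrightarrow> pure_payoff n M x i \<le> pure_payoff n M x n \<and>
       (0 < x i \<longrightarrow> pure_payoff n M x i = pure_payoff n M x n)"
    by blast
  define gap where "gap y i = pure_payoff n M y i - pure_payoff n M y n" for y i
  define d where "d = M n j - M j j"
  define t where "t = max 0 (gap x j / d)"
  define x' where "x' = x(j := t)"
  have gap_x': "gap x' i = gap x i + (M i j - M n j) * t" for i
    using support step.hyps unfolding gap_def x'_def by (simp add: pure_payoff_fun_upd algebra_simps)
  \<comment> \<open>column j is constant below the diagonal\<close>
  have "gap x' i = gap x i" if "Suc j \<le> i" "i \<le> n" for i
    using columns[of j i] that by (cases "i = n") (auto simp: gap_x')
  then have best': "gap x' i \<le> 0 \<and> (0 < x' i \<longrightarrow> gap x' i = 0)" if "Suc j \<le> i" "i \<le> n" for i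
    using best that unfolding gap_def x'_def by auto
  have d_pos: "0 < d" using diagonal step.hyps unfolding d_def by simp
  have gap_x'_j: "gap x' j = gap x j - d * t" unfolding gap_x' d_def by (simp add: algebra_simps)
  have "gap x' j \<le> 0 \<and> (0 < x' j \<longrightarrow> gap x' j = 0)"
  proof (cases "gap x j \<le> 0")
    case True
    with d_pos have "t = 0" unfolding t_def by (simp add: divide_nonpos_pos)
    with True gap_x'_j show ?thesis by (simp add: x'_def)
  next
    case False
    with d_pos have "t = gap x j / d" unfolding t_def by simp
    with d_pos gap_x'_j show ?thesis by simp
  qed
  with best' have "\<forall>i. j \<le> i \<and> i \<le> n \<longrightarrow> gap x' i \<le> 0 \<and> (0 < x' i \<longrightarrow> gap x' i = 0)"
    by (metis Suc_leI le_neq_implies_less)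
  moreover have "\<forall>i. 0 \<le> x' i" "x' n = 1" "\<forall>i. i < j \<or> n < i \<longrightarrow> x' i = 0"
    using nonneg last support step.hyps unfolding x'_def t_def by auto
  ultimately show ?case unfolding gap_def by auto
qed

lemma nash_equilibrium_exists_if_columns_constant_below_diagonal:
  assumes columns: "\<And>j k. k < j \<Longrightarrow> j < n \<Longrightarrow> M j k = M n k"
    and diagonal: "\<And>j. j < n \<Longrightarrow> M j j < M n j"
  shows "\<exists>p. nash_equilibrium n M p"
proof -
  obtain x where nonneg: "\<forall>i. 0 \<le> x i" and last: "x n = 1" and support: "\<forall>i. n < i \<longrightarrow> x i = 0"
    and best: "\<forall>i. i \<le> n \<longrightarrow> pure_payoff n M x i \<le> pure_payoff n M x n \<and>
       (0 < x i \<longrightarrow> pure_payoff n M x i = pure_payoff n M x n)"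
    using best_replies_by_backward_induction[of n M 0] columns diagonal by auto
  define s where "s = (\<Sum>i\<le>n. x i)"
  have x_le_s: "x i \<le> s" if "i \<le> n" for i
    unfolding s_def using nonneg that by (intro member_le_sum) auto
  with last have s_pos: "0 < s" by force
  define p where "p i = x i / s" for i
  have "p \<in> mixed_strategies n"
    using nonneg support x_le_s s_pos unfolding mixed_strategies_def p_def
    by (auto simp: s_def simp flip: sum_divide_distrib)
  moreover have "pure_payoff n M p i = pure_payoff n M x i / s" for i
    unfolding pure_payoff_def p_def by (simp add: sum_divide_distrib)
  ultimately show ?thesis
    using best s_pos
    by (intro exI[of _ p] nash_equilibrium_if_best_replies_on_support[where u = "pure_payoff n M p n"])
       (auto simp: p_def divide_right_mono zero_less_divide_iff)
qed

definition contest_matrix :: "(nat \<Rightarrow> real) \<Rightarrow> (nat \<Rightarrow> real) \<Rightarrow> (nat \<Rightarrow> real) \<Rightarrow> nat \<Rightarrow> nat \<Rightarrow> real" where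
  "contest_matrix c v \<rho> j k =
     (if j > k then v k - c k else if j = k then v k / 2 - c k - \<rho> k else - c j)"

lemma contest_matrix_symmetric_part:
  "(contest_matrix c v \<rho> j k + contest_matrix c v \<rho> k j) / 2 =
     (v (min j k) / 2 - c (min j k)) - (if j = k then \<rho> j else 0)"
  by (auto simp: contest_matrix_def min_def field_simps)

lemma contest_matrix_cond_neg_def:
  assumes "\<And>k. k < n \<Longrightarrow> c k < c (Suc k)" and "\<And>k. k < n \<Longrightarrow> v (Suc k) \<le> v k"
    and "\<And>k. k \<le> n \<Longrightarrow> 0 \<le> \<rho> k"
  shows "cond_neg_def n (contest_matrix c v \<rho>)"
proof (rule cond_neg_def_if_symmetric_part_min[OF contest_matrix_symmetric_part])
  show "v (Suc k) / 2 - c (Suc k) < v k / 2 - c k" if "k < n" for k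
    using assms(1,2)[OF that] by simp
qed (use assms(3) in simp)

lemma contest_matrix_ex_nash_equilibrium:
  assumes "\<And>k. k < n \<Longrightarrow> 0 < v k / 2 + \<rho> k"
  shows "\<exists>p. nash_equilibrium n (contest_matrix c v \<rho>) p"
proof (rule nash_equilibrium_exists_if_columns_constant_below_diagonal)
  show "contest_matrix c v \<rho> j j < contest_matrix c v \<rho> n j" if "j < n" for j
    using assms[OF that] that by (simp add: contest_matrix_def)
qed (simp add: contest_matrix_def)

lemma contest_matrix_ex1_ESS_cond_neg_def:
  assumes cinc: "\<And>k. k < n \<Longrightarrow> c k < c (Suc k)" and vdec: "\<And>k. k < n \<Longrightarrow> v (Suc k) \<le> v k"
    and vpos: "0 < v n" and \<rho>: "\<And>k. k \<le> n \<Longrightarrow> 0 \<le> \<rho> k"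
  shows "(\<exists>!p. is_ESS n (contest_matrix c v \<rho>) p) \<and> cond_neg_def n (contest_matrix c v \<rho>)"
proof -
  have "0 < v k / 2 + \<rho> k" if "k < n" for k
  proof -
    have "v n \<le> v k"
      by (rule lift_Suc_antimono_le_ivl[of "{..<n}"]) (use vdec that in auto)
    with vpos \<rho>[of k] that show ?thesis by simp
  qed
  then obtain p where "nash_equilibrium n (contest_matrix c v \<rho>) p"
    using contest_matrix_ex_nash_equilibrium by blast
  moreover have "cond_neg_def n (contest_matrix c v \<rho>)"
    using cinc vdec \<rho> by (rule contest_matrix_cond_neg_def)
  ultimately show ?thesis
    using ex1_ESS_if_cond_neg_def by blast
qed

theorem lemma5p1:
  fixes n :: nat and c v :: "nat \<Rightarrow> real"
  assumes n: "n \<ge> 1"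
    and c0: "0 \<le> c 0" and cinc: "\<And>k. k < n \<Longrightarrow> c k < c (Suc k)"
    and vdec: "\<And>k. k < n \<Longrightarrow> v k \<ge> v (Suc k)" and vpos: "v n > 0"
  shows "(let A = (\<lambda>j k. if j > k then v k - c k else if j = k then v k / 2 - c k else - c j)
          in (\<exists>!p. is_ESS n A p) \<and> cond_neg_def n A) \<and>
     (\<forall>\<rho> :: nat \<Rightarrow> real. (\<forall>k\<le>n. 0 \<le> \<rho> k \<and> \<rho> k < v k / 2) \<longrightarrow>
          (let B = (\<lambda>j k. if j > k then v k - c k else if j = k then v k / 2 - c k - \<rho> k else - c j)
           in (\<exists>!p. is_ESS n B p) \<and> cond_neg_def n B))"
proof (intro conjI allI impI)
  have "(\<lambda>j k. if j > k then v k - c k else if j = k then v k / 2 - c k else - c j) =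
      contest_matrix c v (\<lambda>_. 0)"
    by (auto simp: contest_matrix_def fun_eq_iff)
  with contest_matrix_ex1_ESS_cond_neg_def[of n c v "\<lambda>_. 0"] cinc vdec vpos
  show "let A = (\<lambda>j k. if j > k then v k - c k else if j = k then v k / 2 - c k else - c j)
      in (\<exists>!p. is_ESS n A p) \<and> cond_neg_def n A"
    by simp
next
  fix \<rho> :: "nat \<Rightarrow> real" assume "\<forall>k\<le>n. 0 \<le> \<rho> k \<and> \<rho> k < v k / 2"
  moreover have "(\<lambda>j k. if j > k then v k - c k else if j = k then v k / 2 - c k - \<rho> k else - c j) =
      contest_matrix c v \<rho>"
    by (auto simp: contest_matrix_def fun_eq_iff)
  ultimately show "let B = (\<lambda>j k. if j > k then v k - c k else if j = k then v k / 2 - c k - \<rho> k else - c j)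
      in (\<exists>!p. is_ESS n B p) \<and> cond_neg_def n B"
    using contest_matrix_ex1_ESS_cond_neg_def[of n c v \<rho>] cinc vdec vpos by simp
qed

end
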